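(* A binary relation (i.e. a structure $(X,\rho)$ with $\rho\subseteq X\times X$) is unary FA-presentable if and only if it is isomorphic to a binary relation obtained by propagating a unary FA-foundational binary relation.
   Context: A structure is unary FA-presentable if there exist a regular language $L\subseteq a^*$ over a one-letter alphabet and a surjection $\phi:L\to X$ such that, for each of the relations equality and $\rho$, the set of pairs $(u,v)\in L^2$ with $u\phi,v\phi$ related is a regular relation, i.e. $\{\mathrm{conv}(u,v)\}$ is a regular language, where $\mathrm{conv}(u,v)$ is the word over $\{a,\$\}^2$ reading $u,v$ in parallel with the shorter word padded by $\$$. A unary FA-foundational binary relation is a finite set $Q$ with a relation $\rho\subseteq Q\times Q$ and pairwise disjoint subsets $P_0,\dots,P_{n-1}$ ($n\ge 0$) called seeds, each $P_k=\{p^{(k)}_1,\dots,p^{(k)}_5\}$ with five distinct elements, such that, writing $Q'=Q\setminus(P_0\cup\dots\cup P_{n-1})$, for all $k,l\in\{0,\dots,n-1\}$ (possibly $k=l$) and all $q\in Q'$: (1) the statements $p^{(k)}_i\,\rho\,p^{(l)}_i$ for $i=1,\dots,5$ are all true or all false; (2) the statements $p^{(k)}_i\,\rho\,p^{(l)}_{i+1}$ for $i=1,\dots,4$ are all true or all false; (3) the statements $p^{(k)}_{i+1}\,\rho\,p^{(l)}_{i}$ for $i=1,\dots,4$ are all true or all false; (4) the statements $p^{(k)}_i\,\rho\,p^{(l)}_j$ for all $1\le i,j\le 5$ with $j-i\ge 2$ are all true or all false; (5) the statements $p^{(k)}_j\,\rho\,p^{(l)}_i$ for all $1\le i,j\le5$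 with $j-i\ge 2$ are all true or all false; (6) the statements $q\,\rho\,p^{(k)}_i$ for $i=2,\dots,5$ are all true or all false; (7) the statements $p^{(k)}_i\,\rho\,q$ for $i=2,\dots,5$ are all true or all false. Propagating it yields the structure $(\hat Q,\hat\rho)$ where $\hat Q=Q'\cup\{p^{(k)}_i: 0\le k\le n-1,\ i\in\mathbb{N}=\{1,2,\dots\}\}$ (new distinct elements $p^{(k)}_i$ for $i\ge 6$), and $\hat\rho$ is defined by: for $p,q\in Q'$, $p\,\hat\rho\, q$ iff $p\,\rho\, q$; for $i,j\in\mathbb{N}$, $p^{(k)}_i\,\hat\rho\,p^{(l)}_j$ iff [$j=i$ and $p^{(k)}_1\rho p^{(l)}_1$] or [$j=i+1$ and $p^{(k)}_1\rho p^{(l)}_2$] or [$j=i-1$ and $p^{(k)}_2\rho p^{(l)}_1$] or [$j\ge i+2$ and $p^{(k)}_1\rho p^{(l)}_3$] or [$j\le i-2$ and $p^{(k)}_3\rho p^{(l)}_1$]; for $q\in Q'$: $q\,\hat\rho\,p^{(k)}_1$ iff $q\rho p^{(k)}_1$, and for $i\ge2$, $q\,\hat\rho\,p^{(k)}_i$ iff $q\rho p^{(k)}_2$; $p^{(k)}_1\,\hat\rho\,q$ iff $p^{(k)}_1\rho q$, and for $i\ge 2$, $p^{(k)}_i\,\hat\rho\,q$ iff $p^{(k)}_2\rho q$. (Then $\hat\rho$ restricted to $Q$ equals $\rho$.) *)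

theory Defs
  imports Main
begin

definition regular :: "'c list set \<Rightarrow> bool" where
  "regular L \<longleftrightarrow> (\<exists>(N::nat) (delta :: nat \<Rightarrow> 'c \<Rightarrow> nat) q0 F.
      q0 < N \<and> (\<forall>q<N. \<forall>c. delta q c < N) \<and> F \<subseteq> {..<N} \<and>
      L = {w. foldl delta q0 w \<in> F})"

text \<open>Words over the one-letter alphabet {a}: lists over unit. The padded
  alphabet {a,\$}: symbols A (= a) and Pad (= \$).\<close>

datatype sym = A | Pad

definition conv :: "unit list \<Rightarrow> unit list \<Rightarrow> (sym \<times> sym) list" where
  "conv u v = map (\<lambda>i. (if i < length u then A else Pad, if i < length v then A else Pad))
                  [0..<max (length u) (length v)]"

definition regular_relation :: "(unit list \<Rightarrow> unit list \<Rightarrow> bool) \<Rightarrow> bool" where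
  "regular_relation R \<longleftrightarrow> regular {conv u v | u v. R u v}"

definition unary_FA_presentable :: "'a set \<Rightarrow> ('a \<Rightarrow> 'a \<Rightarrow> bool) \<Rightarrow> bool" where
  "unary_FA_presentable X rho \<longleftrightarrow> (\<exists>(L :: unit list set) (phi :: unit list \<Rightarrow> 'a).
      regular L \<and> phi ` L = X \<and>
      regular_relation (\<lambda>u v. u \<in> L \<and> v \<in> L \<and> phi u = phi v) \<and>
      regular_relation (\<lambda>u v. u \<in> L \<and> v \<in> L \<and> rho (phi u) (phi v)))"

definition uniform :: "'i set \<Rightarrow> ('i \<Rightarrow> bool) \<Rightarrow> bool" where
  "uniform I P \<longleftrightarrow> (\<forall>i\<in>I. P i) \<or> (\<forall>i\<in>I. \<not> P i)"

definition seed_elems :: "nat \<Rightarrow> (nat \<Rightarrow> nat \<Rightarrow> 'b) \<Rightarrow> 'b set" where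
  "seed_elems n p = {p k i | k i. k < n \<and> i \<in> {1..5}}"

definition FA_foundational ::
  "'b set \<Rightarrow> ('b \<Rightarrow> 'b \<Rightarrow> bool) \<Rightarrow> nat \<Rightarrow> (nat \<Rightarrow> nat \<Rightarrow> 'b) \<Rightarrow> bool" where
  "FA_foundational Q rho n p \<longleftrightarrow>
     finite Q \<and> (\<forall>x y. rho x y \<longrightarrow> x \<in> Q \<and> y \<in> Q) \<and>
     seed_elems n p \<subseteq> Q \<and>
     inj_on (\<lambda>(k, i). p k i) ({..<n} \<times> {1..5}) \<and>
     (\<forall>k<n. \<forall>l<n.
        uniform {1..5} (\<lambda>i. rho (p k i) (p l i)) \<and>
        uniform {1..4} (\<lambda>i. rho (p k i) (p l (i+1))) \<and>
        uniform {1..4} (\<lambda>i. rho (p k (i+1)) (p l i)) \<and>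
        uniform {(i, j). 1 \<le> i \<and> j \<le> 5 \<and> i + 2 \<le> j} (\<lambda>(i, j). rho (p k i) (p l j)) \<and>
        uniform {(i, j). 1 \<le> i \<and> j \<le> 5 \<and> i + 2 \<le> j} (\<lambda>(i, j). rho (p k j) (p l i))) \<and>
     (\<forall>k<n. \<forall>q \<in> Q - seed_elems n p.
        uniform {2..5} (\<lambda>i. rho q (p k i)) \<and>
        uniform {2..5} (\<lambda>i. rho (p k i) q))"

text \<open>The propagated structure. Elements of Q' are represented as Inl q, and
  the element p^(k)_i (k < n, i \<ge> 1) as Inr (k, i).\<close>

definition prop_carrier :: "'b set \<Rightarrow> nat \<Rightarrow> (nat \<Rightarrow> nat \<Rightarrow> 'b) \<Rightarrow> ('b + nat \<times> nat) set" where
  "prop_carrier Q n p = Inl ` (Q - seed_elems n p) \<union> {Inr (k, i) | k i. k < n \<and> 1 \<le> i}"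

fun prop_rel :: "('b \<Rightarrow> 'b \<Rightarrow> bool) \<Rightarrow> (nat \<Rightarrow> nat \<Rightarrow> 'b) \<Rightarrow>
    ('b + nat \<times> nat) \<Rightarrow> ('b + nat \<times> nat) \<Rightarrow> bool" where
  "prop_rel rho p (Inl q) (Inl r) = rho q r"
| "prop_rel rho p (Inr (k, i)) (Inr (l, j)) =
     ((j = i \<and> rho (p k 1) (p l 1)) \<or>
      (j = i + 1 \<and> rho (p k 1) (p l 2)) \<or>
      (j + 1 = i \<and> rho (p k 2) (p l 1)) \<or>
      (j \<ge> i + 2 \<and> rho (p k 1) (p l 3)) \<or>
      (i \<ge> j + 2 \<and> rho (p k 3) (p l 1)))"
| "prop_rel rho p (Inl q) (Inr (k, i)) =
     (if i = 1 then rho q (p k 1) else rho q (p k 2))"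
| "prop_rel rho p (Inr (k, i)) (Inl q) =
     (if i = 1 then rho (p k 1) q else rho (p k 2) q)"

definition rel_isomorphic ::
  "'a set \<Rightarrow> ('a \<Rightarrow> 'a \<Rightarrow> bool) \<Rightarrow> 'c set \<Rightarrow> ('c \<Rightarrow> 'c \<Rightarrow> bool) \<Rightarrow> bool" where
  "rel_isomorphic X rho Y sigma \<longleftrightarrow>
     (\<exists>f. bij_betw f X Y \<and> (\<forall>x\<in>X. \<forall>y\<in>X. rho x y \<longleftrightarrow> sigma (f x) (f y)))"

end

theory Submission
  imports Defs
begin

text \<open>Over a one-letter alphabet a word is just its length, and a binary relation on lengths is
  regular exactly when it is ultimately periodic: beyond a threshold T its truth value is
  invariant under adding a period P to both arguments, and, once the arguments are at least T
  apart, under adding P to the larger one alone. A propagated structure, numbered by its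
  finitely many non-seed elements followed by the seed chains in blocks of n, is ultimately
  periodic with period n. Conversely, in a presentation keep for each element its least
  representing length; this set of lengths is ultimately periodic, and with a common period P
  exceeding the threshold T the relation on it depends, beyond a point T', only on the residues
  modulo P and on whether the quotients differ by 0, 1, -1 or more. The representatives in
  [T', T' + P) start the seed chains, and the representatives below T' + 5P with the relation
  restricted to them form a foundational relation whose propagation is the given structure.\<close>

lemma regular_of_dfa:
  fixes \<delta> :: "'s \<Rightarrow> 'c \<Rightarrow> 's"
  assumes fin: "finite Qs" and q0: "q0 \<in> Qs" and closed: "\<And>q c. q \<in> Qs \<Longrightarrow> \<delta> q c \<in> Qs"
  shows "regular {w. foldl \<delta> q0 w \<in> F}"
proof -
  obtain h where h: "bij_betw h Qs {..<card Qs}"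
    using ex_bij_betw_finite_nat[OF fin] atLeast0LessThan by metis
  define N where "N = card Qs"
  define h' where "h' = the_inv_into Qs h"
  have h_lt: "\<And>q. q \<in> Qs \<Longrightarrow> h q < N" using h unfolding N_def bij_betw_def by auto
  have h'_h: "\<And>q. q \<in> Qs \<Longrightarrow> h' (h q) = q"
    unfolding h'_def using h by (simp add: bij_betw_def the_inv_into_f_f)
  have h'_in: "\<And>n. n < N \<Longrightarrow> h' n \<in> Qs"
    unfolding h'_def N_def using h by (metis bij_betw_def lessThan_iff the_inv_into_into subset_refl)
  define \<delta>' where "\<delta>' = (\<lambda>n c. if n < N then h (\<delta> (h' n) c) else 0)"
  have run: "foldl \<delta>' (h q) w = h (foldl \<delta> q w) \<and> foldl \<delta> q w \<in> Qs" if "q \<in> Qs" for w q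
    using that by (induct w arbitrary: q) (simp_all add: \<delta>'_def h_lt h'_h closed)
  have "{w. foldl \<delta> q0 w \<in> F} = {w. foldl \<delta>' (h q0) w \<in> h ` (F \<inter> Qs)}"
    using run[OF q0] inj_on_image_mem_iff[of h Qs] h by (auto simp: bij_betw_def)
  moreover have "\<delta>' n c < N" if "n < N" for n c
    using that h'_in closed h_lt by (simp add: \<delta>'_def)
  moreover have "h q0 < N" "h ` (F \<inter> Qs) \<subseteq> {..<N}" using h_lt q0 by auto
  ultimately show ?thesis unfolding regular_def by blast
qed

lemma foldl_replicate: "foldl f q (replicate m c) = ((\<lambda>q. f q c) ^^ m) q"
  by (induct m arbitrary: q) (simp_all add: funpow_Suc_right del: funpow.simps)

lemma funpow_less:
  assumes "\<And>q. q < N \<Longrightarrow> f q < N" and "q < N"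
  shows "(f ^^ m) q < N"
  by (induct m) (simp_all add: assms)

text \<open>Pigeonhole: the orbit of q under a self-map of {..<N} becomes periodic
  before time N, with a period at most N and hence dividing N!.\<close>

lemma funpow_eventually_periodic:
  assumes closed: "\<And>q. q < N \<Longrightarrow> f q < N" and q: "q < N" and m: "N \<le> m"
  shows "(f ^^ (m + fact N)) q = (f ^^ m) q"
proof -
  have "\<not> inj_on (\<lambda>i. (f ^^ i) q) {0..N}"
  proof
    assume "inj_on (\<lambda>i. (f ^^ i) q) {0..N}"
    moreover have "(\<lambda>i. (f ^^ i) q) ` {0..N} \<subseteq> {..<N}"
      using funpow_less[OF closed q] by auto
    ultimately have "card {0..N} \<le> card {..<N}" by (rule card_inj_on_le) simp
    then show False by simp
  qed
  then obtain i j where ij: "i < j" "j \<le> N" "(f ^^ i) q = (f ^^ j) q"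
    unfolding inj_on_def by (metis atLeastAtMost_iff linorder_neqE_nat)
  have step: "(f ^^ (x + (j - i))) q = (f ^^ x) q" if "i \<le> x" for x
  proof -
    have "x + (j - i) = (x - i) + j" "x = (x - i) + i" using that ij by auto
    then show ?thesis using ij(3) by (metis comp_apply funpow_add)
  qed
  have cycle: "(f ^^ (m' + t * (j - i))) q = (f ^^ m') q" if "i \<le> m'" for t m'
  proof (induct t)
    case (Suc t)
    have "m' + Suc t * (j - i) = (m' + t * (j - i)) + (j - i)" by simp
    then show ?case using Suc step[of "m' + t * (j - i)"] that by (simp only:)
  qed simp
  have "j - i dvd fact N" using ij by (intro dvd_fact) auto
  then obtain t where "fact N = t * (j - i)" by (metis dvd_def mult.commute)
  then show ?thesis using cycle[of m t] m ij by simp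
qed

definition convn :: "nat \<Rightarrow> nat \<Rightarrow> (sym \<times> sym) list" where
  "convn a b = conv (replicate a ()) (replicate b ())"

lemma length_convn [simp]: "length (convn a b) = max a b"
  by (simp add: convn_def conv_def)

lemma nth_convn:
  "i < max a b \<Longrightarrow> convn a b ! i = (if i < a then A else Pad, if i < b then A else Pad)"
  by (simp add: convn_def conv_def)

lemma convn_le: "convn a (a + e) = replicate a (A, A) @ replicate e (Pad, A)"
  by (rule nth_equalityI) (auto simp: nth_convn nth_append)

lemma convn_ge: "convn (a + e) a = replicate a (A, A) @ replicate e (A, Pad)"
  by (rule nth_equalityI) (auto simp: nth_convn nth_append)

lemma map_fst_convn: "map fst (convn a b) = replicate a A @ replicate (b - a) Pad"
  by (rule nth_equalityI) (auto simp: nth_convn nth_append)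

lemma map_snd_convn: "map snd (convn a b) = replicate b A @ replicate (a - b) Pad"
  by (rule nth_equalityI) (auto simp: nth_convn nth_append)

lemma convn_inject: "convn a b = convn a' b' \<longleftrightarrow> a = a' \<and> b = b'"
proof
  assume eq: "convn a b = convn a' b'"
  have count: "length (filter ((=) A) (map fst (convn x y))) = x \<and>
      length (filter ((=) A) (map snd (convn x y))) = y" for x y
    by (simp add: map_fst_convn map_snd_convn)
  show "a = a' \<and> b = b'" using count[of a b] count[of a' b'] eq by simp
qed simp

lemma convn_snoc_AA: "convn a a @ [(A, A)] = convn (Suc a) (Suc a)"
  by (rule nth_equalityI) (auto simp: nth_convn nth_append less_Suc_eq)

lemma convn_snoc_PadA: "a \<le> b \<Longrightarrow> convn a b @ [(Pad, A)] = convn a (Suc b)"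
  by (rule nth_equalityI) (auto simp: nth_convn nth_append less_Suc_eq max_def)

lemma convn_snoc_APad: "b \<le> a \<Longrightarrow> convn a b @ [(A, Pad)] = convn (Suc a) b"
  by (rule nth_equalityI) (auto simp: nth_convn nth_append less_Suc_eq max_def)

lemma unit_list_eq_replicate: "(u :: unit list) = replicate (length u) ()"
  by (induct u) auto

lemma conv_set_eq_convn_set:
  "{conv u v | u v. R u v} = {convn a b | a b. R (replicate a ()) (replicate b ())}"
  unfolding convn_def by (auto, metis unit_list_eq_replicate)

definition ult_periodic :: "(nat \<Rightarrow> nat \<Rightarrow> bool) \<Rightarrow> nat \<Rightarrow> nat \<Rightarrow> bool" where
  "ult_periodic S T P \<longleftrightarrow> 0 < P \<and>
    (\<forall>a b. T \<le> a \<longrightarrow> T \<le> b \<longrightarrow> S (a + P) (b + P) = S a b) \<and>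
    (\<forall>a b. a + T \<le> b \<longrightarrow> S a (b + P) = S a b) \<and>
    (\<forall>a b. b + T \<le> a \<longrightarrow> S (a + P) b = S a b)"

lemma ult_periodic_converse: "ult_periodic S T P \<Longrightarrow> ult_periodic (\<lambda>a b. S b a) T P"
  unfolding ult_periodic_def by auto

lemma ult_periodic_shift_both:
  assumes "ult_periodic S T P" "T \<le> a" "T \<le> b"
  shows "S (a + k * P) (b + k * P) = S a b"
proof (induct k)
  case (Suc k)
  have "S (a + k * P + P) (b + k * P + P) = S (a + k * P) (b + k * P)"
    using assms unfolding ult_periodic_def by (simp add: trans_le_add1)
  then show ?case using Suc by (simp add: ac_simps)
qed simp

lemma ult_periodic_shift_right:
  assumes "ult_periodic S T P" "a + T \<le> b"
  shows "S a (b + k * P) = S a b"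
proof (induct k)
  case (Suc k)
  have "S a (b + k * P + P) = S a (b + k * P)"
    using assms unfolding ult_periodic_def by (simp add: trans_le_add1)
  then show ?case using Suc by (simp add: ac_simps)
qed simp

lemma ult_periodic_shift_left:
  assumes "ult_periodic S T P" "b + T \<le> a"
  shows "S (a + k * P) b = S a b"
  using ult_periodic_shift_right[OF ult_periodic_converse[OF assms(1)] assms(2)] .

lemma ult_periodic_mono:
  assumes "ult_periodic S T P" "T \<le> T'" "0 < k"
  shows "ult_periodic S T' (k * P)"
  unfolding ult_periodic_def
proof (intro conjI allI impI)
  show "0 < k * P" using assms unfolding ult_periodic_def by simp
qed (use assms ult_periodic_shift_both[OF assms(1)] ult_periodic_shift_right[OF assms(1)]
      ult_periodic_shift_left[OF assms(1)] in simp_all)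

lemma ult_periodic_common:
  assumes "ult_periodic S\<^sub>1 T\<^sub>1 P\<^sub>1" "ult_periodic S\<^sub>2 T\<^sub>2 P\<^sub>2"
  shows "\<exists>T P. 0 < T \<and> T < P \<and> ult_periodic S\<^sub>1 T P \<and> ult_periodic S\<^sub>2 T P"
proof -
  define T where "T = Suc (max T\<^sub>1 T\<^sub>2)"
  define P where "P = P\<^sub>1 * P\<^sub>2 * (T + 1)"
  have pos: "0 < P\<^sub>1" "0 < P\<^sub>2" using assms unfolding ult_periodic_def by simp_all
  have "ult_periodic S\<^sub>1 T ((P\<^sub>2 * (T + 1)) * P\<^sub>1)" "ult_periodic S\<^sub>2 T ((P\<^sub>1 * (T + 1)) * P\<^sub>2)"
    using ult_periodic_mono[OF assms(1)] ult_periodic_mono[OF assms(2)] pos unfolding T_def by auto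
  moreover have "T < P"
  proof -
    have "1 * (T + 1) \<le> P\<^sub>1 * P\<^sub>2 * (T + 1)" using pos by (intro mult_right_mono) simp_all
    then show ?thesis unfolding P_def by simp
  qed
  ultimately show ?thesis
    unfolding T_def P_def by (metis mult.commute mult.left_commute zero_less_Suc)
qed

lemma ult_periodic_bounded:
  "(\<And>a b. S a b \<Longrightarrow> a < T \<and> b < T) \<Longrightarrow> 0 < P \<Longrightarrow> ult_periodic S T P"
  unfolding ult_periodic_def by (meson add_leD2 not_less trans_le_add1)

lemma ult_periodic_eq: "0 < T \<Longrightarrow> 0 < P \<Longrightarrow> ult_periodic (=) T P"
  unfolding ult_periodic_def by auto

lemma ult_periodic_of_runs:
  fixes g h h' :: "nat \<Rightarrow> nat"
  assumes closed: "\<And>q. q < N \<Longrightarrow> g q < N \<and> h q < N \<and> h' q < N" and q0: "q0 < N"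
    and above: "\<And>a e. S a (a + e) \<longleftrightarrow> (h ^^ e) ((g ^^ a) q0) \<in> F"
    and below: "\<And>a e. S (a + e) a \<longleftrightarrow> (h' ^^ e) ((g ^^ a) q0) \<in> F"
  shows "ult_periodic S N (fact N)"
  unfolding ult_periodic_def
proof (intro conjI allI impI)
  have g_closed: "\<And>q. q < N \<Longrightarrow> g q < N" and h_closed: "\<And>q. q < N \<Longrightarrow> h q < N"
    and h'_closed: "\<And>q. q < N \<Longrightarrow> h' q < N" using closed by simp_all
  have g_per: "(g ^^ (a + fact N)) q0 = (g ^^ a) q0" if "N \<le> a" for a
    using funpow_eventually_periodic[OF g_closed q0 that] .
  note g_lt = funpow_less[OF g_closed q0]
  show "0 < (fact N :: nat)" by simp
  fix a b
  show "S (a + fact N) (b + fact N) = S a b" if "N \<le> a" "N \<le> b"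
  proof (cases "a \<le> b")
    case True
    define e where "e = b - a"
    have "b = a + e" using True unfolding e_def by simp
    moreover have "S (a + fact N) ((a + fact N) + e) = S a (a + e)"
      using above g_per[OF that(1)] by simp
    ultimately show ?thesis by (simp add: ac_simps)
  next
    case False
    define e where "e = a - b"
    have "a = b + e" using False unfolding e_def by simp
    moreover have "S ((b + fact N) + e) (b + fact N) = S (b + e) b"
      using below g_per[OF that(2)] by simp
    ultimately show ?thesis by (simp add: ac_simps)
  qed
  show "S a (b + fact N) = S a b" if "a + N \<le> b"
  proof -
    define e where "e = b - a"
    have e: "b = a + e" "N \<le> e" using that unfolding e_def by auto
    have "S a (a + (e + fact N)) = S a (a + e)"
      using above funpow_eventually_periodic[OF h_closed g_lt e(2)] by simp
    then show ?thesis using e by (simp add: ac_simps)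
  qed
  show "S (a + fact N) b = S a b" if "b + N \<le> a"
  proof -
    define e where "e = a - b"
    have e: "a = b + e" "N \<le> e" using that unfolding e_def by auto
    have "S (b + (e + fact N)) b = S (b + e) b"
      using below funpow_eventually_periodic[OF h'_closed g_lt e(2)] by simp
    then show ?thesis using e by (simp add: ac_simps)
  qed
qed

lemma regular_imp_ult_periodic:
  assumes "regular {convn a b | a b. S a b}"
  shows "\<exists>T P. ult_periodic S T P"
proof -
  obtain N q0 :: nat and \<delta> F where q0: "q0 < N" and closed: "\<forall>q<N. \<forall>c. \<delta> q c < N"
    and L: "{convn a b | a b. S a b} = {w. foldl \<delta> q0 w \<in> F}"
    using assms unfolding regular_def by (elim exE conjE) blast
  have "convn a b \<in> {convn a b | a b. S a b} \<longleftrightarrow> S a b" for a b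
    by (simp add: convn_inject)
  then have accept: "S a b \<longleftrightarrow> foldl \<delta> q0 (convn a b) \<in> F" for a b
    by (simp add: L)
  have "ult_periodic S N (fact N)"
  proof (rule ult_periodic_of_runs)
    show "\<And>q. q < N \<Longrightarrow> \<delta> q (A, A) < N \<and> \<delta> q (Pad, A) < N \<and> \<delta> q (A, Pad) < N"
      using closed by blast
    show "S a (a + e) \<longleftrightarrow>
        ((\<lambda>q. \<delta> q (Pad, A)) ^^ e) (((\<lambda>q. \<delta> q (A, A)) ^^ a) q0) \<in> F" for a e
      by (simp add: accept convn_le foldl_replicate)
    show "S (a + e) a \<longleftrightarrow>
        ((\<lambda>q. \<delta> q (A, Pad)) ^^ e) (((\<lambda>q. \<delta> q (A, A)) ^^ a) q0) \<in> F" for a e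
      by (simp add: accept convn_ge foldl_replicate)
  qed (rule q0)
  then show ?thesis by blast
qed

definition reduce :: "nat \<Rightarrow> nat \<Rightarrow> nat \<Rightarrow> nat" where
  "reduce T P x = (if x < T then x else T + (x - T) mod P)"

lemma reduce_less: "0 < P \<Longrightarrow> reduce T P x < T + P"
  unfolding reduce_def by auto

lemma reduce_0 [simp]: "reduce T P 0 = 0"
  unfolding reduce_def by auto

lemma reduce_Suc_reduce: "reduce T P (Suc (reduce T P x)) = reduce T P (Suc x)"
  unfolding reduce_def by (auto simp: mod_Suc_eq Suc_diff_le)

lemma reduce_decomp: "T \<le> x \<Longrightarrow> x = reduce T P x + ((x - T) div P) * P \<and> T \<le> reduce T P x"
  unfolding reduce_def by simp

lemma ult_periodic_reduce:
  assumes "ult_periodic S T P"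
  shows "S (reduce T P a) (reduce T P a + reduce T P e) = S a (a + e)"
proof -
  have diag: "S (reduce T P a) (reduce T P a + e) = S a (a + e)"
  proof (cases "T \<le> a")
    case True
    define k where "k = (a - T) div P"
    have dec: "a = reduce T P a + k * P" "T \<le> reduce T P a"
      using reduce_decomp[OF True] unfolding k_def by simp_all
    have "S (reduce T P a + k * P) (reduce T P a + e + k * P) = S (reduce T P a) (reduce T P a + e)"
      using dec by (intro ult_periodic_shift_both[OF assms]) auto
    then show ?thesis using dec(1) by (metis add.commute add.left_commute)
  qed (simp add: reduce_def)
  have "S x (x + reduce T P e) = S x (x + e)" for x
  proof (cases "T \<le> e")
    case True
    define k where "k = (e - T) div P"
    have dec: "e = reduce T P e + k * P" "T \<le> reduce T P e"
      using reduce_decomp[OF True] unfolding k_def by simp_all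
    have "S x (x + reduce T P e + k * P) = S x (x + reduce T P e)"
      using dec by (intro ult_periodic_shift_right[OF assms]) auto
    then show ?thesis using dec(1) by (metis add.assoc)
  qed (simp add: reduce_def)
  then show ?thesis using diag by simp
qed

text \<open>The automaton reading convn a b remembers, up to the reduction r, the length of the
  common prefix and, once one track has ended, which one ended and the length read since.\<close>

datatype conv_state = Diag nat | Below nat nat | Above nat nat | Dead

fun conv_step :: "(nat \<Rightarrow> nat) \<Rightarrow> conv_state \<Rightarrow> sym \<times> sym \<Rightarrow> conv_state" where
  "conv_step r (Diag m) (A, A) = Diag (r (Suc m))"
| "conv_step r (Diag m) (Pad, A) = Below m (r 1)"
| "conv_step r (Below m d) (Pad, A) = Below m (r (Suc d))"
| "conv_step r (Diag m) (A, Pad) = Above m (r 1)"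
| "conv_step r (Above m d) (A, Pad) = Above m (r (Suc d))"
| "conv_step r _ _ = Dead"

definition conv_state_of :: "(nat \<Rightarrow> nat) \<Rightarrow> nat \<Rightarrow> nat \<Rightarrow> conv_state" where
  "conv_state_of r a b =
    (if a = b then Diag (r a) else if a < b then Below (r a) (r (b - a)) else Above (r b) (r (a - b)))"

fun conv_accepts :: "(nat \<Rightarrow> nat \<Rightarrow> bool) \<Rightarrow> conv_state \<Rightarrow> bool" where
  "conv_accepts S (Diag m) = S m m"
| "conv_accepts S (Below m d) = S m (m + d)"
| "conv_accepts S (Above m d) = S (m + d) m"
| "conv_accepts S Dead = False"

context
  fixes r :: "nat \<Rightarrow> nat"
  assumes r_0: "r 0 = 0" and r_Suc: "\<And>x. r (Suc (r x)) = r (Suc x)"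
begin

lemma conv_step_diag: "((\<lambda>s. conv_step r s (A, A)) ^^ a) (Diag 0) = Diag (r a)"
  by (induct a) (simp_all add: r_0 r_Suc)

lemma conv_step_below:
  "((\<lambda>s. conv_step r s (Pad, A)) ^^ e) (Diag m) = (if e = 0 then Diag m else Below m (r e))"
  by (induct e) (simp_all add: r_Suc)

lemma conv_step_above:
  "((\<lambda>s. conv_step r s (A, Pad)) ^^ e) (Diag m) = (if e = 0 then Diag m else Above m (r e))"
  by (induct e) (simp_all add: r_Suc)

lemma foldl_conv_step_convn: "foldl (conv_step r) (Diag 0) (convn a b) = conv_state_of r a b"
proof (cases "a \<le> b")
  case True
  then have "convn a b = replicate a (A, A) @ replicate (b - a) (Pad, A)"
    using convn_le[of a "b - a"] by simp
  then show ?thesis using True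
    by (simp add: foldl_replicate conv_step_diag conv_step_below conv_state_of_def)
next
  case False
  then have "convn a b = replicate b (A, A) @ replicate (a - b) (A, Pad)"
    using convn_ge[of b "a - b"] by simp
  then show ?thesis using False
    by (simp add: foldl_replicate conv_step_diag conv_step_above conv_state_of_def)
qed

lemma foldl_conv_step_not_Dead:
  "foldl (conv_step r) (Diag 0) w \<noteq> Dead \<Longrightarrow> \<exists>a b. w = convn a b"
proof (induct w rule: rev_induct)
  case Nil
  have "[] = convn 0 0" by (simp add: convn_def conv_def)
  then show ?case by blast
next
  case (snoc c w)
  have "foldl (conv_step r) (Diag 0) w \<noteq> Dead"
    using snoc.prems by (cases c) auto
  then obtain a b where w: "w = convn a b" using snoc.hyps by blast
  have step: "conv_step r (conv_state_of r a b) c \<noteq> Dead"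
    using snoc.prems by (simp add: w foldl_conv_step_convn)
  obtain x y where c: "c = (x, y)" by fastforce
  show ?case
  proof (cases x; cases y)
    assume "x = A" "y = A"
    then have "a = b" using step c by (auto simp: conv_state_of_def split: if_splits)
    then show ?case using w c \<open>x = A\<close> \<open>y = A\<close> convn_snoc_AA by blast
  next
    assume "x = Pad" "y = A"
    then have "a \<le> b" using step c by (auto simp: conv_state_of_def split: if_splits)
    then show ?case using w c \<open>x = Pad\<close> \<open>y = A\<close> convn_snoc_PadA by blast
  next
    assume "x = A" "y = Pad"
    then have "b \<le> a" using step c by (auto simp: conv_state_of_def split: if_splits)
    then show ?case using w c \<open>x = A\<close> \<open>y = Pad\<close> convn_snoc_APad by blast
  next
    assume "x = Pad" "y = Pad"
    then show ?case using step c by (cases "conv_state_of r a b") simp_all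
  qed
qed

end

lemma conv_accepts_reduce:
  assumes per: "ult_periodic S T P"
  shows "conv_accepts S (conv_state_of (reduce T P) a b) \<longleftrightarrow> S a b"
  using ult_periodic_reduce[OF per, of a "b - a"] ult_periodic_reduce[OF per, of a 0]
    ult_periodic_reduce[OF ult_periodic_converse[OF per], of b "a - b"]
  unfolding conv_state_of_def by auto

lemma ult_periodic_imp_regular:
  assumes per: "ult_periodic S T P"
  shows "regular {convn a b | a b. S a b}"
proof -
  define r where "r = reduce T P"
  have r_0: "r 0 = 0" and r_Suc: "\<And>x. r (Suc (r x)) = r (Suc x)"
    unfolding r_def by (simp_all add: reduce_Suc_reduce)
  have r_less: "r x < T + P" for x
    using per reduce_less unfolding r_def ult_periodic_def by blast
  note accepts = conv_accepts_reduce[OF per, folded r_def]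
  define K where "K = T + P"
  define states where "states = insert Dead (Diag ` {..<K} \<union>
    case_prod Below ` ({..<K} \<times> {..<K}) \<union> case_prod Above ` ({..<K} \<times> {..<K}))"
  have "{convn a b | a b. S a b} = {w. foldl (conv_step r) (Diag 0) w \<in> Collect (conv_accepts S)}"
  proof (intro set_eqI iffI)
    fix w assume "w \<in> {convn a b | a b. S a b}"
    then show "w \<in> {w. foldl (conv_step r) (Diag 0) w \<in> Collect (conv_accepts S)}"
      using foldl_conv_step_convn[OF r_0 r_Suc] accepts by auto
  next
    fix w assume w: "w \<in> {w. foldl (conv_step r) (Diag 0) w \<in> Collect (conv_accepts S)}"
    then have "foldl (conv_step r) (Diag 0) w \<noteq> Dead" by auto
    then obtain a b where "w = convn a b"
      using foldl_conv_step_not_Dead[OF r_0 r_Suc] by blast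
    then show "w \<in> {convn a b | a b. S a b}"
      using w foldl_conv_step_convn[OF r_0 r_Suc] accepts by auto
  qed
  moreover have "conv_step r s (x, y) \<in> states" if "s \<in> states" for s x y
    using that r_less unfolding states_def K_def by (cases s; cases x; cases y) auto
  moreover have "finite states" "Diag 0 \<in> states"
    using per unfolding states_def K_def ult_periodic_def by auto
  ultimately show ?thesis
    using regular_of_dfa[of states "Diag 0" "conv_step r" "Collect (conv_accepts S)"] by force
qed

lemma regular_relation_iff_ult_periodic:
  "regular_relation R \<longleftrightarrow> (\<exists>T P. ult_periodic (\<lambda>a b. R (replicate a ()) (replicate b ())) T P)"
  unfolding regular_relation_def conv_set_eq_convn_set
  using regular_imp_ult_periodic[of "\<lambda>a b. R (replicate a ()) (replicate b ())"]
    ult_periodic_imp_regular[of "\<lambda>a b. R (replicate a ()) (replicate b ())"] by blast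

lemma rel_isomorphic_sym:
  assumes "rel_isomorphic X \<rho> Y \<sigma>"
  shows "rel_isomorphic Y \<sigma> X \<rho>"
proof -
  obtain f where f: "bij_betw f X Y" and pres: "\<forall>x\<in>X. \<forall>y\<in>X. \<rho> x y \<longleftrightarrow> \<sigma> (f x) (f y)"
    using assms unfolding rel_isomorphic_def by blast
  let ?g = "the_inv_into X f"
  have g: "bij_betw ?g Y X" using bij_betw_the_inv_into[OF f] .
  have "\<sigma> x y \<longleftrightarrow> \<rho> (?g x) (?g y)" if "x \<in> Y" "y \<in> Y" for x y
  proof -
    have "f (?g x) = x" "f (?g y) = y" using f that by (simp_all add: f_the_inv_into_f_bij_betw)
    moreover have "?g x \<in> X" "?g y \<in> X" using g that by (simp_all add: bij_betw_apply)
    ultimately show ?thesis using pres by metis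
  qed
  then show ?thesis unfolding rel_isomorphic_def using g by blast
qed

lemma rel_isomorphic_trans:
  assumes "rel_isomorphic X \<rho> Y \<sigma>" "rel_isomorphic Y \<sigma> Z \<tau>"
  shows "rel_isomorphic X \<rho> Z \<tau>"
proof -
  obtain f where f: "bij_betw f X Y" "\<forall>x\<in>X. \<forall>y\<in>X. \<rho> x y \<longleftrightarrow> \<sigma> (f x) (f y)"
    using assms(1) unfolding rel_isomorphic_def by blast
  obtain g where g: "bij_betw g Y Z" "\<forall>x\<in>Y. \<forall>y\<in>Y. \<sigma> x y \<longleftrightarrow> \<tau> (g x) (g y)"
    using assms(2) unfolding rel_isomorphic_def by blast
  have "bij_betw (g \<circ> f) X Z" using bij_betw_trans[OF f(1) g(1)] .
  moreover have "\<forall>x\<in>X. \<forall>y\<in>X. \<rho> x y \<longleftrightarrow> \<tau> ((g \<circ> f) x) ((g \<circ> f) y)"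
    using f g bij_betw_apply[OF f(1)] by simp
  ultimately show ?thesis unfolding rel_isomorphic_def by blast
qed

lemma unary_FA_presentable_iso:
  assumes iso: "rel_isomorphic X \<rho> Y \<sigma>" and pres: "unary_FA_presentable Y \<sigma>"
  shows "unary_FA_presentable X \<rho>"
proof -
  obtain g where g: "bij_betw g Y X" and g_rel: "\<forall>x\<in>Y. \<forall>y\<in>Y. \<sigma> x y \<longleftrightarrow> \<rho> (g x) (g y)"
    using rel_isomorphic_sym[OF iso] unfolding rel_isomorphic_def by blast
  obtain L :: "unit list set" and \<phi> where L: "regular L" "\<phi> ` L = Y"
    and eq: "regular_relation (\<lambda>u v. u \<in> L \<and> v \<in> L \<and> \<phi> u = \<phi> v)"
    and rel: "regular_relation (\<lambda>u v. u \<in> L \<and> v \<in> L \<and> \<sigma> (\<phi> u) (\<phi> v))"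
    using pres unfolding unary_FA_presentable_def by blast
  have "(\<lambda>u v. u \<in> L \<and> v \<in> L \<and> g (\<phi> u) = g (\<phi> v)) = (\<lambda>u v. u \<in> L \<and> v \<in> L \<and> \<phi> u = \<phi> v)"
    using g L(2) by (auto simp: fun_eq_iff bij_betw_def inj_on_eq_iff)
  moreover have "(\<lambda>u v. u \<in> L \<and> v \<in> L \<and> \<rho> (g (\<phi> u)) (g (\<phi> v))) =
      (\<lambda>u v. u \<in> L \<and> v \<in> L \<and> \<sigma> (\<phi> u) (\<phi> v))"
    using g_rel L(2) by (auto simp: fun_eq_iff)
  moreover have "(\<lambda>u. g (\<phi> u)) ` L = X" using g L(2) unfolding bij_betw_def by (metis image_image)
  ultimately show ?thesis
    unfolding unary_FA_presentable_def using L(1) eq rel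
    by (intro exI[of _ L] exI[of _ "\<lambda>u. g (\<phi> u)"]) simp
qed

lemma regular_UNIV: "regular (UNIV :: 'c list set)"
proof -
  have "foldl (\<lambda>q c. q) q w = q" for q :: nat and w :: "'c list"
    by (induct w) auto
  then show ?thesis using regular_of_dfa[of "{0::nat}" 0 "\<lambda>q (c :: 'c). q" "{0}"] by simp
qed

lemma regular_length_less: "regular {w :: 'c list. length w < c}"
proof -
  have run: "foldl (\<lambda>q c'. min (Suc q) c) q w = min (q + length w) c"
    if "q \<le> c" for q and w :: "'c list"
    using that by (induct w arbitrary: q) auto
  show ?thesis
    using regular_of_dfa[of "{..c}" 0 "\<lambda>q (c' :: 'c). min (Suc q) c" "{..<c}"] run[of 0]
    by (simp add: min_less_iff_disj)
qed

lemma unary_FA_presentable_by_lengths: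
  fixes enc :: "nat \<Rightarrow> 'a"
  assumes enc: "bij_betw enc N X" and reg: "regular {w :: unit list. length w \<in> N}"
    and eq: "ult_periodic (\<lambda>a b. a \<in> N \<and> b \<in> N \<and> a = b) T P"
    and rel: "ult_periodic (\<lambda>a b. a \<in> N \<and> b \<in> N \<and> \<rho> (enc a) (enc b)) T' P'"
  shows "unary_FA_presentable X \<rho>"
  unfolding unary_FA_presentable_def
proof (intro exI conjI)
  let ?L = "{w :: unit list. length w \<in> N}" and ?\<phi> = "\<lambda>w :: unit list. enc (length w)"
  show "regular ?L" by (rule reg)
  have "length ` ?L = N" by (auto intro!: image_eqI[where x = "replicate _ ()"])
  then show "?\<phi> ` ?L = X" using enc by (metis bij_betw_imp_surj_on image_image)
  have "inj_on enc N" using enc by (simp add: bij_betw_def)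
  then have "(\<lambda>a b. replicate a () \<in> ?L \<and> replicate b () \<in> ?L \<and>
      ?\<phi> (replicate a ()) = ?\<phi> (replicate b ())) = (\<lambda>a b. a \<in> N \<and> b \<in> N \<and> a = b)"
    by (auto simp: fun_eq_iff inj_on_eq_iff)
  then show "regular_relation (\<lambda>u v. u \<in> ?L \<and> v \<in> ?L \<and> ?\<phi> u = ?\<phi> v)"
    unfolding regular_relation_iff_ult_periodic using eq by auto
  show "regular_relation (\<lambda>u v. u \<in> ?L \<and> v \<in> ?L \<and> \<rho> (?\<phi> u) (?\<phi> v))"
    unfolding regular_relation_iff_ult_periodic using rel by auto
qed

definition prop_enc :: "nat \<Rightarrow> (nat \<Rightarrow> 'b) \<Rightarrow> nat \<Rightarrow> nat \<Rightarrow> 'b + nat \<times> nat" where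
  "prop_enc c e n a = (if a < c then Inl (e a) else Inr ((a - c) mod n, (a - c) div n + 1))"

lemma bij_betw_prop_enc:
  assumes e: "bij_betw e {..<c} (Q - seed_elems n p)"
  shows "bij_betw (prop_enc c e n) {a. a < c \<or> 0 < n} (prop_carrier Q n p)"
  unfolding bij_betw_def
proof
  show "inj_on (prop_enc c e n) {a. a < c \<or> 0 < n}"
  proof (rule inj_onI)
    fix a b assume ab: "a \<in> {a. a < c \<or> 0 < n}" "b \<in> {a. a < c \<or> 0 < n}"
      and eq: "prop_enc c e n a = prop_enc c e n b"
    show "a = b"
    proof (cases "a < c")
      case True
      then show ?thesis using eq e unfolding prop_enc_def bij_betw_def inj_on_def
        by (auto split: if_splits)
    next
      case False
      then have "c \<le> b" "(a - c) mod n = (b - c) mod n" "(a - c) div n = (b - c) div n"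
        using eq unfolding prop_enc_def by (auto split: if_splits)
      moreover from this have "a - c = b - c" by (metis div_mult_mod_eq)
      ultimately show ?thesis using False by simp
    qed
  qed
  show "prop_enc c e n ` {a. a < c \<or> 0 < n} = prop_carrier Q n p"
  proof (intro set_eqI iffI)
    fix x assume "x \<in> prop_enc c e n ` {a. a < c \<or> 0 < n}"
    then obtain a where a: "a < c \<or> 0 < n" "x = prop_enc c e n a" by blast
    then show "x \<in> prop_carrier Q n p"
      using bij_betw_apply[OF e, of a] unfolding prop_enc_def prop_carrier_def by auto
  next
    fix x assume "x \<in> prop_carrier Q n p"
    then consider q where "q \<in> Q - seed_elems n p" "x = Inl q"
      | k i where "k < n" "1 \<le> i" "x = Inr (k, i)"
      unfolding prop_carrier_def by blast
    then show "x \<in> prop_enc c e n ` {a. a < c \<or> 0 < n}"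
    proof cases
      case 1
      then obtain a where "a < c" "e a = q" using e by (metis bij_betw_iff_bijections lessThan_iff)
      then show ?thesis using 1 unfolding prop_enc_def by (auto intro!: image_eqI[of _ _ a])
    next
      case 2
      then have "prop_enc c e n (c + (i - 1) * n + k) = x" unfolding prop_enc_def by auto
      then show ?thesis using 2 by (intro image_eqI[of _ _ "c + (i - 1) * n + k"]) auto
    qed
  qed
qed

lemma prop_enc_above:
  assumes "0 < n" "c \<le> a"
  shows "prop_enc c e n a = Inr ((a - c) mod n, (a - c) div n + 1)"
    and "prop_enc c e n (a + n) = Inr ((a - c) mod n, Suc ((a - c) div n + 1))"
proof -
  have shift: "a + n - c = (a - c) + n" using assms by simp
  have "(a + n - c) mod n = (a - c) mod n" "(a + n - c) div n = Suc ((a - c) div n)"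
    using arg_cong[OF shift, of "\<lambda>x. x mod n"] arg_cong[OF shift, of "\<lambda>x. x div n"] assms(1)
    by (simp_all add: div_add_self2)
  then show "prop_enc c e n (a + n) = Inr ((a - c) mod n, Suc ((a - c) div n + 1))"
    using assms unfolding prop_enc_def by simp
qed (use assms in \<open>simp add: prop_enc_def\<close>)

lemma div_add_two_le: "0 < (n::nat) \<Longrightarrow> x + 2 * n \<le> y \<Longrightarrow> x div n + 2 \<le> y div n"
  using div_le_mono[of "x + 2 * n" y n] by simp

lemma ult_periodic_prop_rel_enc:
  assumes n: "0 < n"
  shows "ult_periodic (\<lambda>a b. prop_rel \<rho> p (prop_enc c e n a) (prop_enc c e n b)) (c + 2 * n) n"
  unfolding ult_periodic_def
proof (intro conjI allI impI)
  note enc = prop_enc_above[OF n]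
  show "0 < n" by (rule n)
  fix a b
  show "prop_rel \<rho> p (prop_enc c e n (a + n)) (prop_enc c e n (b + n)) =
      prop_rel \<rho> p (prop_enc c e n a) (prop_enc c e n b)" if "c + 2 * n \<le> a" "c + 2 * n \<le> b"
  proof -
    have "c \<le> a" "c \<le> b" using that by simp_all
    then show ?thesis unfolding enc[OF \<open>c \<le> a\<close>] enc[OF \<open>c \<le> b\<close>] by simp
  qed
  show "prop_rel \<rho> p (prop_enc c e n a) (prop_enc c e n (b + n)) =
      prop_rel \<rho> p (prop_enc c e n a) (prop_enc c e n b)" if ab: "a + (c + 2 * n) \<le> b"
  proof (cases "a < c")
    case True
    have "2 \<le> (b - c) div n" using div_add_two_le[OF n, of 0 "b - c"] ab by (simp add: numeral_2_eq_2)
    moreover have "c \<le> b" using ab by simp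
    ultimately show ?thesis using True unfolding enc[OF \<open>c \<le> b\<close>] by (simp add: prop_enc_def)
  next
    case False
    have "(a - c) div n + 2 \<le> (b - c) div n" using div_add_two_le[OF n, of "a - c" "b - c"] ab by simp
    moreover have "c \<le> a" "c \<le> b" using ab False by simp_all
    ultimately show ?thesis unfolding enc[OF \<open>c \<le> a\<close>] enc[OF \<open>c \<le> b\<close>] by simp
  qed
  show "prop_rel \<rho> p (prop_enc c e n (a + n)) (prop_enc c e n b) =
      prop_rel \<rho> p (prop_enc c e n a) (prop_enc c e n b)" if ab: "b + (c + 2 * n) \<le> a"
  proof (cases "b < c")
    case True
    have "2 \<le> (a - c) div n" using div_add_two_le[OF n, of 0 "a - c"] ab by (simp add: numeral_2_eq_2)
    moreover have "c \<le> a" using ab by simp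
    ultimately show ?thesis using True unfolding enc[OF \<open>c \<le> a\<close>] by (simp add: prop_enc_def)
  next
    case False
    have "(b - c) div n + 2 \<le> (a - c) div n" using div_add_two_le[OF n, of "b - c" "a - c"] ab by simp
    moreover have "c \<le> a" "c \<le> b" using ab False by simp_all
    ultimately show ?thesis unfolding enc[OF \<open>c \<le> a\<close>] enc[OF \<open>c \<le> b\<close>] by simp
  qed
qed

lemma unary_FA_presentable_prop:
  assumes "finite (Q - seed_elems n p)"
  shows "unary_FA_presentable (prop_carrier Q n p) (prop_rel \<rho> p)"
proof -
  obtain e where e: "bij_betw e {..<card (Q - seed_elems n p)} (Q - seed_elems n p)"
    using ex_bij_betw_nat_finite[OF assms] atLeast0LessThan by metis
  define c where "c = card (Q - seed_elems n p)"
  define N where "N = {a. a < c \<or> 0 < n}"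
  note enc = bij_betw_prop_enc[OF e[folded c_def]]
  show ?thesis
  proof (cases "0 < n")
    case True
    then have "N = UNIV" unfolding N_def by simp
    then show ?thesis
      using enc ult_periodic_eq[of 1 1] ult_periodic_prop_rel_enc[OF True, of \<rho> p c e] regular_UNIV
      by (intro unary_FA_presentable_by_lengths[where N = N]) (simp_all add: N_def)
  next
    case False
    then have N: "N = {..<c}" unfolding N_def by auto
    show ?thesis
    proof (rule unary_FA_presentable_by_lengths[where N = N])
      show "bij_betw (prop_enc c e n) N (prop_carrier Q n p)" using enc unfolding N_def .
      show "regular {w :: unit list. length w \<in> N}" using regular_length_less by (simp add: N)
      show "ult_periodic (\<lambda>a b. a \<in> N \<and> b \<in> N \<and> a = b) c 1"
        by (rule ult_periodic_bounded) (auto simp: N)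
      show "ult_periodic (\<lambda>a b. a \<in> N \<and> b \<in> N \<and>
          prop_rel \<rho> p (prop_enc c e n a) (prop_enc c e n b)) c 1"
        by (rule ult_periodic_bounded) (auto simp: N)
    qed
  qed
qed

lemma add_mult_inject:
  fixes x y i j P :: nat
  assumes "x < P" "y < P"
  shows "x + i * P = y + j * P \<longleftrightarrow> x = y \<and> i = j"
proof
  assume eq: "x + i * P = y + j * P"
  have "P \<noteq> 0" using assms by simp
  then have "(x + i * P) mod P = x" "(x + i * P) div P = i"
    "(y + j * P) mod P = y" "(y + j * P) div P = j"
    using assms by simp_all
  then show "x = y \<and> i = j" using eq by metis
qed simp

lemma uniform_const: "(\<And>i. i \<in> I \<Longrightarrow> P i = c) \<Longrightarrow> uniform I P"
  unfolding uniform_def by auto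

text \<open>In the locale below, core, core_rel and seed are the Q, rho and seeds p of a foundational
  relation whose propagation is (R, S); seed k i is the i-th element of the chain through the
  k-th representative in [T', T' + P).\<close>

locale ult_periodic_structure =
  fixes R :: "nat set" and S :: "nat \<Rightarrow> nat \<Rightarrow> bool" and T P T' :: nat
  assumes S_periodic: "ult_periodic S T P"
    and T_less_P: "T < P" and T_le_T': "T \<le> T'"
    and R_periodic: "\<And>a. T' \<le> a \<Longrightarrow> a + P \<in> R \<longleftrightarrow> a \<in> R"
begin

definition residues :: "nat set" where
  "residues = {a \<in> R. T' \<le> a \<and> a < T' + P}"

definition nseeds :: nat where
  "nseeds = card residues"

definition base :: "nat \<Rightarrow> nat" where
  "base k = sorted_list_of_set residues ! k"

definition seed :: "nat \<Rightarrow> nat \<Rightarrow> nat" where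
  "seed k i = base k + (i - 1) * P"

definition core :: "nat set" where
  "core = {a \<in> R. a < T' + 5 * P}"

definition core_rel :: "nat \<Rightarrow> nat \<Rightarrow> bool" where
  "core_rel a b \<longleftrightarrow> a \<in> core \<and> b \<in> core \<and> S a b"

definition embed :: "nat + nat \<times> nat \<Rightarrow> nat" where
  "embed c = (case c of Inl a \<Rightarrow> a | Inr (k, i) \<Rightarrow> seed k i)"

lemma bij_betw_base: "bij_betw base {..<nseeds} residues"
  unfolding base_def nseeds_def
  by (rule bij_betw_nth) (simp_all add: residues_def)

lemma base_residue: "k < nseeds \<Longrightarrow> base k \<in> R \<and> T' \<le> base k \<and> base k < T' + P"
  using bij_betw_apply[OF bij_betw_base] unfolding residues_def by auto

lemma R_periodic_mult: "T' \<le> a \<Longrightarrow> a + t * P \<in> R \<longleftrightarrow> a \<in> R"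
proof (induct t)
  case (Suc t)
  then show ?case using R_periodic[of "a + t * P"] by (simp add: ac_simps)
qed simp

lemma seed_shift: "1 \<le> i \<Longrightarrow> seed k (i + t) = seed k i + t * P"
proof -
  assume "1 \<le> i"
  then have "i + t - 1 = (i - 1) + t" by simp
  then show ?thesis unfolding seed_def by (simp add: add_mult_distrib)
qed

lemma seed_in_R: "k < nseeds \<Longrightarrow> seed k i \<in> R"
  unfolding seed_def using base_residue R_periodic_mult by simp

lemma seed_bounds:
  assumes "k < nseeds"
  shows "T' + (i - 1) * P \<le> seed k i" and "seed k i < T' + (i - 1) * P + P"
  using base_residue[OF assms] unfolding seed_def by simp_all

lemma seed_inject:
  assumes "k < nseeds" "l < nseeds" "1 \<le> i" "1 \<le> j"
  shows "seed k i = seed l j \<longleftrightarrow> k = l \<and> i = j"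
proof
  assume eq: "seed k i = seed l j"
  have "(base k - T') + (i - 1) * P = (base l - T') + (j - 1) * P"
    using eq base_residue assms(1,2) unfolding seed_def by fastforce
  moreover have "base k - T' < P" "base l - T' < P"
    using base_residue[OF assms(1)] base_residue[OF assms(2)] by auto
  ultimately have "base k - T' = base l - T'" "i - 1 = j - 1"
    using add_mult_inject by blast+
  then have "base k = base l" "i = j"
    using base_residue[OF assms(1)] base_residue[OF assms(2)] assms(3,4) by auto
  then show "k = l \<and> i = j"
    using bij_betw_base assms(1,2) unfolding bij_betw_def inj_on_def by auto
qed simp

lemma seed_decomp:
  assumes "T' \<le> a" "a \<in> R"
  shows "\<exists>k < nseeds. \<exists>i \<ge> 1. a = seed k i"
proof -
  define b where "b = T' + (a - T') mod P"
  have P: "0 < P" using T_less_P by simp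
  have a: "a = b + ((a - T') div P) * P" unfolding b_def using assms(1) by simp
  have "b \<in> residues"
    using assms R_periodic_mult[of b "(a - T') div P"] a P unfolding residues_def b_def by simp
  then obtain k where "k < nseeds" "base k = b"
    using bij_betw_base by (metis bij_betw_iff_bijections lessThan_iff)
  moreover from this have "a = seed k ((a - T') div P + 1)" using a unfolding seed_def by simp
  ultimately show ?thesis using le_add2 by blast
qed

lemma seed_ge_T: "k < nseeds \<Longrightarrow> T \<le> seed k i"
  using seed_bounds(1)[of k i] T_le_T' by simp

lemma S_seed_shift:
  assumes "k < nseeds" "l < nseeds" "1 \<le> i" "1 \<le> j"
  shows "S (seed k (i + t)) (seed l (j + t)) = S (seed k i) (seed l j)"
  using ult_periodic_shift_both[OF S_periodic seed_ge_T seed_ge_T] assms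
  by (simp add: seed_shift)

lemma far_from_seed:
  assumes "l < nseeds" "2 \<le> m" "a < T' + (m - 2) * P"
  shows "a + T \<le> seed l m"
proof -
  have "m - 1 = Suc (m - 2)" using assms(2) by simp
  then have "(m - 1) * P = (m - 2) * P + P" by simp
  then show ?thesis using seed_bounds(1)[OF assms(1), of m] assms(3) T_less_P by linarith
qed

lemma S_seed_right:
  assumes "l < nseeds" "2 \<le> m" "a < T' + (m - 2) * P" "m \<le> j"
  shows "S a (seed l j) = S a (seed l m)"
proof -
  have "m + (j - m) = j" using assms(4) by simp
  then have "seed l j = seed l m + (j - m) * P"
    using seed_shift[of m l "j - m"] assms(2) by simp
  then show ?thesis
    using ult_periodic_shift_right[OF S_periodic far_from_seed[OF assms(1-3)]] by simp
qed

lemma S_seed_left: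
  assumes "l < nseeds" "2 \<le> m" "a < T' + (m - 2) * P" "m \<le> j"
  shows "S (seed l j) a = S (seed l m) a"
proof -
  have "m + (j - m) = j" using assms(4) by simp
  then have "seed l j = seed l m + (j - m) * P"
    using seed_shift[of m l "j - m"] assms(2) by simp
  then show ?thesis
    using ult_periodic_shift_left[OF S_periodic far_from_seed[OF assms(1-3)]] by simp
qed

lemma S_seed:
  assumes k: "k < nseeds" and l: "l < nseeds" and "1 \<le> i" "1 \<le> j"
  shows "S (seed k i) (seed l j) = prop_rel S seed (Inr (k, i)) (Inr (l, j))"
proof -
  note shift = S_seed_shift[OF k l]
  consider "j = i" | "j = i + 1" | "i = j + 1" | "i + 2 \<le> j" | "j + 2 \<le> i" by linarith
  then show ?thesis
  proof cases
    case 1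
    then show ?thesis using shift[of 1 1 "i - 1"] \<open>1 \<le> i\<close> by simp
  next
    case 2
    then show ?thesis using shift[of 1 2 "i - 1"] \<open>1 \<le> i\<close> by simp
  next
    case 3
    then show ?thesis using shift[of 2 1 "j - 1"] \<open>1 \<le> j\<close> by simp
  next
    case 4
    have "S (seed k i) (seed l j) = S (seed k 1) (seed l (j - i + 1))"
      using shift[of 1 "j - i + 1" "i - 1"] 4 \<open>1 \<le> i\<close> by simp
    also have "\<dots> = S (seed k 1) (seed l 3)"
      using S_seed_right[OF l, of 3 "seed k 1" "j - i + 1"] seed_bounds(2)[OF k, of 1] 4 by simp
    finally show ?thesis using 4 by simp
  next
    case 5
    have "S (seed k i) (seed l j) = S (seed k (i - j + 1)) (seed l 1)"
      using shift[of "i - j + 1" 1 "j - 1"] 5 \<open>1 \<le> j\<close> by simp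
    also have "\<dots> = S (seed k 3) (seed l 1)"
      using S_seed_left[OF k, of 3 "seed l 1" "i - j + 1"] seed_bounds(2)[OF l, of 1] 5 by simp
    finally show ?thesis using 5 by simp
  qed
qed

lemma S_outer_seed:
  assumes "a < T'" "l < nseeds" "1 \<le> j"
  shows "S a (seed l j) = prop_rel S seed (Inl a) (Inr (l, j))"
    and "S (seed l j) a = prop_rel S seed (Inr (l, j)) (Inl a)"
  using S_seed_right[OF assms(2), of 2 a j] S_seed_left[OF assms(2), of 2 a j] assms
  by (cases "j = 1"; simp)+

lemma seed_less_iff:
  assumes "k < nseeds" "1 \<le> i"
  shows "seed k i < T' + 5 * P \<longleftrightarrow> i \<le> 5"
proof
  assume "seed k i < T' + 5 * P"
  then have "(i - 1) * P < 5 * P" using seed_bounds(1)[OF assms(1), of i] by linarith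
  then have "i - 1 < 5" by simp
  then show "i \<le> 5" by linarith
next
  assume "i \<le> 5"
  then have "(i - 1) * P \<le> 4 * P" by (intro mult_le_mono1) simp
  then show "seed k i < T' + 5 * P" using seed_bounds(2)[OF assms(1), of i] by linarith
qed

lemma seed_elems_eq: "seed_elems nseeds seed = {a \<in> R. T' \<le> a \<and> a < T' + 5 * P}"
proof (intro set_eqI iffI)
  fix a assume "a \<in> seed_elems nseeds seed"
  then obtain k i where "k < nseeds" "i \<in> {1..5}" "a = seed k i" unfolding seed_elems_def by blast
  then show "a \<in> {a \<in> R. T' \<le> a \<and> a < T' + 5 * P}"
    using seed_in_R seed_bounds(1)[of k i] seed_less_iff[of k i] by auto
next
  fix a assume a: "a \<in> {a \<in> R. T' \<le> a \<and> a < T' + 5 * P}"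
  then obtain k i where "k < nseeds" "1 \<le> i" "a = seed k i" using seed_decomp by blast
  then show "a \<in> seed_elems nseeds seed"
    using a seed_less_iff[of k i] unfolding seed_elems_def by auto
qed

lemma core_minus_seeds: "core - seed_elems nseeds seed = {a \<in> R. a < T'}"
  unfolding seed_elems_eq core_def using T_less_P by auto

lemma seed_in_core: "k < nseeds \<Longrightarrow> 1 \<le> i \<Longrightarrow> i \<le> 5 \<Longrightarrow> seed k i \<in> core"
  unfolding core_def using seed_in_R seed_less_iff by simp

lemma prop_carrier_cases:
  assumes "c \<in> prop_carrier core nseeds seed"
  obtains a where "c = Inl a" "a \<in> R" "a < T'"
    | k i where "c = Inr (k, i)" "k < nseeds" "1 \<le> i"
  using assms unfolding prop_carrier_def core_minus_seeds by blast

lemma bij_betw_embed: "bij_betw embed (prop_carrier core nseeds seed) R"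
  unfolding bij_betw_def
proof
  show "inj_on embed (prop_carrier core nseeds seed)"
  proof (rule inj_onI)
    fix c d assume c: "c \<in> prop_carrier core nseeds seed" and d: "d \<in> prop_carrier core nseeds seed"
      and eq: "embed c = embed d"
    have below: "seed k i \<noteq> a" if "k < nseeds" "a < T'" for k i a
      using seed_bounds(1)[OF that(1), of i] that(2) by linarith
    show "c = d"
    proof (cases rule: prop_carrier_cases[OF c]; cases rule: prop_carrier_cases[OF d])
      fix a l j assume "c = Inl a" "a < T'" "d = Inr (l, j)" "l < nseeds"
      then show "c = d" using eq below[of l a j] by (simp add: embed_def)
    next
      fix k i b assume "c = Inr (k, i)" "k < nseeds" "d = Inl b" "b < T'"
      then show "c = d" using eq below[of k b i] by (simp add: embed_def)
    next
      fix k i l j assume "c = Inr (k, i)" "k < nseeds" "1 \<le> i" "d = Inr (l, j)" "l < nseeds" "1 \<le> j"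
      then show "c = d" using eq seed_inject[of k l i j] by (simp add: embed_def)
    qed (use eq in \<open>simp add: embed_def\<close>)
  qed
  show "embed ` prop_carrier core nseeds seed = R"
  proof (intro set_eqI iffI)
    fix a assume "a \<in> embed ` prop_carrier core nseeds seed"
    then show "a \<in> R" by (auto elim!: prop_carrier_cases simp: embed_def seed_in_R)
  next
    fix a assume a: "a \<in> R"
    show "a \<in> embed ` prop_carrier core nseeds seed"
    proof (cases "a < T'")
      case True
      then have "Inl a \<in> prop_carrier core nseeds seed"
        using a unfolding prop_carrier_def core_minus_seeds by simp
      then show ?thesis by (force simp: embed_def)
    next
      case False
      then have "T' \<le> a" by simp
      then obtain k i where "k < nseeds" "1 \<le> i" "a = seed k i" using seed_decomp a by blast
      then have "Inr (k, i) \<in> prop_carrier core nseeds seed" "a = embed (Inr (k, i))"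
        unfolding prop_carrier_def embed_def by auto
      then show ?thesis by blast
    qed
  qed
qed

lemma prop_rel_core_rel:
  assumes "c \<in> prop_carrier core nseeds seed" "d \<in> prop_carrier core nseeds seed"
  shows "prop_rel core_rel seed c d \<longleftrightarrow> prop_rel S seed c d"
proof -
  have outer: "a \<in> core" if "a \<in> R" "a < T'" for a
    using that unfolding core_def by simp
  show ?thesis
    by (cases rule: prop_carrier_cases[OF assms(1)]; cases rule: prop_carrier_cases[OF assms(2)])
      (simp_all add: core_rel_def seed_in_core outer)
qed

lemma prop_rel_embed:
  assumes "c \<in> prop_carrier core nseeds seed" "d \<in> prop_carrier core nseeds seed"
  shows "prop_rel core_rel seed c d \<longleftrightarrow> S (embed c) (embed d)"
  unfolding prop_rel_core_rel[OF assms]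
proof (cases rule: prop_carrier_cases[OF assms(1)]; cases rule: prop_carrier_cases[OF assms(2)])
  fix a b assume "c = Inl a" "d = Inl b"
  then show "prop_rel S seed c d \<longleftrightarrow> S (embed c) (embed d)" by (simp add: embed_def)
next
  fix a l j assume "c = Inl a" "a < T'" "d = Inr (l, j)" "l < nseeds" "1 \<le> j"
  then show "prop_rel S seed c d \<longleftrightarrow> S (embed c) (embed d)"
    using S_outer_seed(1)[of a l j] by (simp add: embed_def)
next
  fix k i b assume "c = Inr (k, i)" "k < nseeds" "1 \<le> i" "d = Inl b" "b < T'"
  then show "prop_rel S seed c d \<longleftrightarrow> S (embed c) (embed d)"
    using S_outer_seed(2)[of b k i] by (simp add: embed_def)
next
  fix k i l j assume "c = Inr (k, i)" "k < nseeds" "1 \<le> i" "d = Inr (l, j)" "l < nseeds" "1 \<le> j"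
  then show "prop_rel S seed c d \<longleftrightarrow> S (embed c) (embed d)"
    using S_seed[of k l i j] by (simp add: embed_def)
qed

lemma core_rel_seed:
  assumes "k < nseeds" "l < nseeds" "i \<in> {1..5}" "j \<in> {1..5}"
  shows "core_rel (seed k i) (seed l j) \<longleftrightarrow> prop_rel S seed (Inr (k, i)) (Inr (l, j))"
  using assms seed_in_core S_seed[of k l i j] unfolding core_rel_def by simp

lemma core_rel_outer:
  assumes "a \<in> core - seed_elems nseeds seed" "k < nseeds" "i \<in> {1..5}"
  shows "core_rel a (seed k i) \<longleftrightarrow> prop_rel S seed (Inl a) (Inr (k, i))"
    and "core_rel (seed k i) a \<longleftrightarrow> prop_rel S seed (Inr (k, i)) (Inl a)"
proof -
  have a: "a \<in> core" "a < T'" using assms(1) unfolding core_minus_seeds by (auto simp: core_def)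
  then show "core_rel a (seed k i) \<longleftrightarrow> prop_rel S seed (Inl a) (Inr (k, i))"
      "core_rel (seed k i) a \<longleftrightarrow> prop_rel S seed (Inr (k, i)) (Inl a)"
    using assms(2,3) seed_in_core S_outer_seed[of a k i] unfolding core_rel_def by auto
qed

lemma FA_foundational_core: "FA_foundational core core_rel nseeds seed"
  unfolding FA_foundational_def
proof (intro conjI allI impI ballI)
  show "finite core" unfolding core_def by simp
  show "seed_elems nseeds seed \<subseteq> core" unfolding seed_elems_eq core_def by auto
  show "inj_on (\<lambda>(k, i). seed k i) ({..<nseeds} \<times> {1..5})"
    by (auto simp: inj_on_def seed_inject)
  fix x y assume "core_rel x y"
  then show "x \<in> core" "y \<in> core" unfolding core_rel_def by simp_all
next
  fix k l assume k: "k < nseeds" and l: "l < nseeds"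
  note seeds = core_rel_seed[OF k l]
  show "uniform {1..5} (\<lambda>i. core_rel (seed k i) (seed l i))"
    by (rule uniform_const[where c = "S (seed k 1) (seed l 1)"]) (simp add: seeds)
  show "uniform {1..4} (\<lambda>i. core_rel (seed k i) (seed l (i + 1)))"
    by (rule uniform_const[where c = "S (seed k 1) (seed l 2)"]) (simp add: seeds)
  show "uniform {1..4} (\<lambda>i. core_rel (seed k (i + 1)) (seed l i))"
    by (rule uniform_const[where c = "S (seed k 2) (seed l 1)"]) (simp add: seeds)
  show "uniform {(i, j). 1 \<le> i \<and> j \<le> 5 \<and> i + 2 \<le> j} (\<lambda>(i, j). core_rel (seed k i) (seed l j))"
    by (rule uniform_const[where c = "S (seed k 1) (seed l 3)"]) (auto simp: seeds)
  show "uniform {(i, j). 1 \<le> i \<and> j \<le> 5 \<and> i + 2 \<le> j} (\<lambda>(i, j). core_rel (seed k j) (seed l i))"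
    by (rule uniform_const[where c = "S (seed k 3) (seed l 1)"]) (auto simp: seeds)
next
  fix k q assume k: "k < nseeds" and q: "q \<in> core - seed_elems nseeds seed"
  show "uniform {2..5} (\<lambda>i. core_rel q (seed k i))"
    by (rule uniform_const[where c = "S q (seed k 2)"]) (simp add: core_rel_outer[OF q k])
  show "uniform {2..5} (\<lambda>i. core_rel (seed k i) q)"
    by (rule uniform_const[where c = "S (seed k 2) q"]) (simp add: core_rel_outer[OF q k])
qed

theorem rel_isomorphic_propagation:
  "rel_isomorphic R S (prop_carrier core nseeds seed) (prop_rel core_rel seed)"
proof (rule rel_isomorphic_sym)
  show "rel_isomorphic (prop_carrier core nseeds seed) (prop_rel core_rel seed) R S"
    unfolding rel_isomorphic_def using bij_betw_embed prop_rel_embed by blast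
qed

end

definition least_reps :: "(nat \<Rightarrow> nat \<Rightarrow> bool) \<Rightarrow> nat set" where
  "least_reps E = {a. E a a \<and> (\<forall>b<a. \<not> E b a)}"

lemma bij_betw_least_reps:
  fixes ph :: "nat \<Rightarrow> 'a"
  shows "bij_betw ph (least_reps (\<lambda>a b. a \<in> M \<and> b \<in> M \<and> ph a = ph b)) (ph ` M)"
  unfolding bij_betw_def
proof
  show "inj_on ph (least_reps (\<lambda>a b. a \<in> M \<and> b \<in> M \<and> ph a = ph b))"
  proof (rule inj_onI)
    fix a b assume "a \<in> least_reps (\<lambda>a b. a \<in> M \<and> b \<in> M \<and> ph a = ph b)"
      "b \<in> least_reps (\<lambda>a b. a \<in> M \<and> b \<in> M \<and> ph a = ph b)" "ph a = ph b"
    then show "a = b" unfolding least_reps_def by (cases a b rule: linorder_cases) auto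
  qed
  show "ph ` least_reps (\<lambda>a b. a \<in> M \<and> b \<in> M \<and> ph a = ph b) = ph ` M"
  proof (intro set_eqI iffI)
    fix x assume "x \<in> ph ` M"
    then obtain m where m: "m \<in> M" "ph m = x" by blast
    define a where "a = (LEAST a. a \<in> M \<and> ph a = x)"
    have a: "a \<in> M \<and> ph a = x" unfolding a_def by (rule LeastI[of _ m]) (use m in simp)
    have "\<not> (b \<in> M \<and> ph b = ph a)" if "b < a" for b
      using not_less_Least[OF that[unfolded a_def]] a by simp
    then have "a \<in> least_reps (\<lambda>a b. a \<in> M \<and> b \<in> M \<and> ph a = ph b)"
      using a unfolding least_reps_def by blast
    then show "x \<in> ph ` least_reps (\<lambda>a b. a \<in> M \<and> b \<in> M \<and> ph a = ph b)" using a by blast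
  qed (auto simp: least_reps_def)
qed

text \<open>Among the b below a, those with b + T \<le> a are compared with a and with a + P alike,
  and the others lie above T and move to b + P together with a.\<close>

lemma least_reps_periodic:
  assumes E: "ult_periodic E T P" and T: "0 < T" and a: "2 * T + P \<le> a"
  shows "a + P \<in> least_reps E \<longleftrightarrow> a \<in> least_reps E"
proof -
  note diag = ult_periodic_shift_both[OF E, where k = 1, simplified]
  note right = ult_periodic_shift_right[OF E, where k = 1, simplified]
  have "(\<exists>b<a. E b a) \<longleftrightarrow> (\<exists>b<a + P. E b (a + P))"
  proof
    assume "\<exists>b<a. E b a"
    then obtain b where b: "b < a" "E b a" by blast
    show "\<exists>b<a + P. E b (a + P)"
    proof (cases "b + T \<le> a")
      case True
      then show ?thesis using right[OF True] b by (intro exI[of _ b]) simp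
    next
      case False
      then show ?thesis using diag[of b a] b a by (intro exI[of _ "b + P"]) simp
    qed
  next
    assume "\<exists>b<a + P. E b (a + P)"
    then obtain b where b: "b < a + P" "E b (a + P)" by blast
    show "\<exists>b<a. E b a"
    proof (cases "b + T \<le> a")
      case True
      then show ?thesis using right[OF True] b T by (intro exI[of _ b]) simp
    next
      case False
      then have "b - P + P = b" "T \<le> b - P" using a by simp_all
      then have "E (b - P) a" using diag[of "b - P" a] b a by simp
      moreover have "b - P < a" using b(1) a by linarith
      ultimately show ?thesis by blast
    qed
  qed
  moreover have "E (a + P) (a + P) \<longleftrightarrow> E a a" using diag[of a a] a by simp
  ultimately show ?thesis unfolding least_reps_def by blast
qed

lemma unary_FA_presentable_lengthsE:
  assumes "unary_FA_presentable X \<rho>"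
  obtains M and ph :: "nat \<Rightarrow> 'a" and T P where "ph ` M = X" "0 < T" "T < P"
    "ult_periodic (\<lambda>a b. a \<in> M \<and> b \<in> M \<and> ph a = ph b) T P"
    "ult_periodic (\<lambda>a b. a \<in> M \<and> b \<in> M \<and> \<rho> (ph a) (ph b)) T P"
proof -
  obtain L :: "unit list set" and \<phi> where L: "\<phi> ` L = X"
    and eq: "regular_relation (\<lambda>u v. u \<in> L \<and> v \<in> L \<and> \<phi> u = \<phi> v)"
    and rel: "regular_relation (\<lambda>u v. u \<in> L \<and> v \<in> L \<and> \<rho> (\<phi> u) (\<phi> v))"
    using assms unfolding unary_FA_presentable_def by blast
  define M where "M = {a. replicate a () \<in> L}"
  define ph where "ph a = \<phi> (replicate a ())" for a
  have "L = (\<lambda>a. replicate a ()) ` M"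
  proof (intro set_eqI iffI)
    fix u assume "u \<in> L"
    then show "u \<in> (\<lambda>a. replicate a ()) ` M"
      using unit_list_eq_replicate[of u] unfolding M_def by (intro image_eqI[of _ _ "length u"]) simp_all
  qed (auto simp: M_def)
  then have X: "ph ` M = X" using L unfolding ph_def by (simp add: image_image)
  obtain T\<^sub>1 P\<^sub>1 T\<^sub>2 P\<^sub>2 where
    "ult_periodic (\<lambda>a b. a \<in> M \<and> b \<in> M \<and> ph a = ph b) T\<^sub>1 P\<^sub>1"
    "ult_periodic (\<lambda>a b. a \<in> M \<and> b \<in> M \<and> \<rho> (ph a) (ph b)) T\<^sub>2 P\<^sub>2"
    using eq rel unfolding regular_relation_iff_ult_periodic M_def ph_def by auto
  from ult_periodic_common[OF this] show ?thesis using that[OF X] by blast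
qed

lemma unary_FA_presentable_imp_propagation:
  assumes "unary_FA_presentable X \<rho>"
  shows "\<exists>(Q :: nat set) \<rho>0 n p. FA_foundational Q \<rho>0 n p \<and>
    rel_isomorphic X \<rho> (prop_carrier Q n p) (prop_rel \<rho>0 p)"
proof -
  obtain M ph T P where X: "ph ` M = X" and T: "0 < T" "T < P"
    and E_per: "ult_periodic (\<lambda>a b. a \<in> M \<and> b \<in> M \<and> ph a = ph b) T P"
    and S_per: "ult_periodic (\<lambda>a b. a \<in> M \<and> b \<in> M \<and> \<rho> (ph a) (ph b)) T P"
    by (rule unary_FA_presentable_lengthsE[OF assms])
  define E where "E = (\<lambda>a b. a \<in> M \<and> b \<in> M \<and> ph a = ph b)"
  define S where "S = (\<lambda>a b. a \<in> M \<and> b \<in> M \<and> \<rho> (ph a) (ph b))"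
  interpret ult_periodic_structure "least_reps E" S T P "2 * T + P"
  proof
    show "ult_periodic S T P" using S_per unfolding S_def .
    show "2 * T + P \<le> a \<Longrightarrow> a + P \<in> least_reps E \<longleftrightarrow> a \<in> least_reps E" for a
      using least_reps_periodic[OF E_per[folded E_def] T(1)] .
  qed (use T in simp_all)
  have "bij_betw ph (least_reps E) X"
    using bij_betw_least_reps[of ph M] X unfolding E_def by simp
  moreover have "S a b \<longleftrightarrow> \<rho> (ph a) (ph b)" if "a \<in> least_reps E" "b \<in> least_reps E" for a b
    using that unfolding least_reps_def E_def S_def by simp
  ultimately have "rel_isomorphic (least_reps E) S X \<rho>"
    unfolding rel_isomorphic_def by blast
  then have "rel_isomorphic X \<rho> (prop_carrier core nseeds seed) (prop_rel core_rel seed)"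
    using rel_isomorphic_trans[OF rel_isomorphic_sym rel_isomorphic_propagation] by blast
  then show ?thesis using FA_foundational_core by blast
qed

theorem theorem5p1:
  fixes X :: "'a set" and rho :: "'a \<Rightarrow> 'a \<Rightarrow> bool"
  assumes "\<forall>x y. rho x y \<longrightarrow> x \<in> X \<and> y \<in> X"
  shows "unary_FA_presentable X rho \<longleftrightarrow>
    (\<exists>(Q :: nat set) rho0 n p. FA_foundational Q rho0 n p \<and>
        rel_isomorphic X rho (prop_carrier Q n p) (prop_rel rho0 p))"
proof
  assume "unary_FA_presentable X rho"
  then show "\<exists>(Q :: nat set) rho0 n p. FA_foundational Q rho0 n p \<and>
      rel_isomorphic X rho (prop_carrier Q n p) (prop_rel rho0 p)"
    by (rule unary_FA_presentable_imp_propagation)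
next
  assume "\<exists>(Q :: nat set) rho0 n p. FA_foundational Q rho0 n p \<and>
      rel_isomorphic X rho (prop_carrier Q n p) (prop_rel rho0 p)"
  then obtain Q :: "nat set" and rho0 n p where "FA_foundational Q rho0 n p"
    and iso: "rel_isomorphic X rho (prop_carrier Q n p) (prop_rel rho0 p)" by blast
  then have "unary_FA_presentable (prop_carrier Q n p) (prop_rel rho0 p)"
    by (intro unary_FA_presentable_prop) (simp add: FA_foundational_def)
  then show "unary_FA_presentable X rho" by (rule unary_FA_presentable_iso[OF iso])
qed

end
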